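(* Assume the user paths are pairwise edge-disjoint, and let $a\ge2$ be an integer. Let $E^*$ be an $s$-$t$ path maximizing $\Lambda(\cdot,P)$ over all directed $s$-$t$ paths, with $d$ edges. If $I\ge\lceil\log_ad\rceil$, the Generalized Recursive Greedy algorithm returns an $s$-$t$ path $E_{\mathbf{f}}$ with $\Lambda(E_{\mathbf{f}},P)\ge\frac{1}{\lceil\log_ad\rceil+1}\Lambda(E^*,P)$.
   Context: $G=(V,E)$ is a simple directed acyclic graph with capacities $C\in\mathbb{R}_{\ge0}^E$, $s,t\in V$ joined by a directed path, budget $0<\gamma\le\min_eC(e)$. User paths $P=\{p_1,\dots,p_k\}$ are directed paths (edge sets) with initial values $\lambda_i\ge0$, $\sum_{i:e\in p_i}\lambda_i\le C(e)$. For $A\subseteq E$, $T(A,P)$ is the optimal value of: maximize $\sum_i\tilde\lambda_i$ s.t. $\sum_{i:e\in p_i}\tilde\lambda_i\le C(e)-\gamma\mathbf{1}_{\{e\in A\}}$ for all $e$, $0\le\tilde\lambda_i\le\lambda_i$; $\Lambda(A,P)=\sum_i\lambda_i-T(A,P)$ and $\Lambda_X(A,P)=\Lambda(A\cup X,P)-\Lambda(X,P)$. Generalized Recursive Greedy algorithm with parameter $a$: the procedure $RG(u_1,u_2,X,i)$ lets $S$ be a shortest (fewest edges) directed $u_1$-$u_2$ path, returns "infeasible" if none exists, returns $S$ if $i=0$, and otherwise sets $best:=S$, $r:=\Lambda_X(S,P)$ and, for every tuple $(v_1,\dots,v_{a-1})\in V^{a-1}$, computes sequentially $Q_1=RG(u_1,v_1,X,i-1)$,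 $Q_2=RG(v_1,v_2,X\cup Q_1,i-1)$, …, $Q_a=RG(v_{a-1},u_2,X\cup Q_1\cup\dots\cup Q_{a-1},i-1)$ (skipping the tuple if any call is infeasible), and if $\Lambda_X(Q_1\cup\dots\cup Q_a,P)>r$ sets $r$ to this value and $best:=Q_1\cup\dots\cup Q_a$; it returns $best$. The algorithm outputs $RG(s,t,\emptyset,I)$. *)

theory Defs
  imports Complex_Main
begin

type_synonym 'v edge = "'v \<times> 'v"

definition dwalk :: "'v set \<Rightarrow> 'v edge set \<Rightarrow> 'v \<Rightarrow> 'v \<Rightarrow> 'v list \<Rightarrow> bool" where
  "dwalk V E u v xs \<longleftrightarrow> xs \<noteq> [] \<and> hd xs = u \<and> last xs = v \<and> set xs \<subseteq> V \<and>
     (\<forall>j. Suc j < length xs \<longrightarrow> (xs ! j, xs ! Suc j) \<in> E)"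

definition edges_of :: "'v list \<Rightarrow> 'v edge set" where
  "edges_of xs = set (zip xs (tl xs))"

definition is_path :: "'v set \<Rightarrow> 'v edge set \<Rightarrow> 'v \<Rightarrow> 'v \<Rightarrow> 'v edge set \<Rightarrow> bool" where
  "is_path V E u v S \<longleftrightarrow> (\<exists>xs. dwalk V E u v xs \<and> S = edges_of xs)"

definition is_shortest_path :: "'v set \<Rightarrow> 'v edge set \<Rightarrow> 'v \<Rightarrow> 'v \<Rightarrow> 'v edge set \<Rightarrow> bool" where
  "is_shortest_path V E u v S \<longleftrightarrow> is_path V E u v S \<and>
     (\<forall>S'. is_path V E u v S' \<longrightarrow> card S \<le> card S')"

definition Tval :: "'v edge set \<Rightarrow> ('v edge \<Rightarrow> real) \<Rightarrow> real \<Rightarrow> (nat \<Rightarrow> 'v edge set)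
     \<Rightarrow> (nat \<Rightarrow> real) \<Rightarrow> nat \<Rightarrow> 'v edge set \<Rightarrow> real" where
  "Tval E C \<gamma> p lam k A = Sup {(\<Sum>i<k. x i) | x.
      (\<forall>i<k. 0 \<le> x i \<and> x i \<le> lam i) \<and>
      (\<forall>e\<in>E. (\<Sum>i\<in>{i. i < k \<and> e \<in> p i}. x i) \<le> C e - (if e \<in> A then \<gamma> else 0))}"

definition Lam :: "'v edge set \<Rightarrow> ('v edge \<Rightarrow> real) \<Rightarrow> real \<Rightarrow> (nat \<Rightarrow> 'v edge set)
     \<Rightarrow> (nat \<Rightarrow> real) \<Rightarrow> nat \<Rightarrow> 'v edge set \<Rightarrow> real" where
  "Lam E C \<gamma> p lam k A = (\<Sum>i<k. lam i) - Tval E C \<gamma> p lam k A"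

definition LamX :: "'v edge set \<Rightarrow> ('v edge \<Rightarrow> real) \<Rightarrow> real \<Rightarrow> (nat \<Rightarrow> 'v edge set)
     \<Rightarrow> (nat \<Rightarrow> real) \<Rightarrow> nat \<Rightarrow> 'v edge set \<Rightarrow> 'v edge set \<Rightarrow> real" where
  "LamX E C \<gamma> p lam k X A = Lam E C \<gamma> p lam k (A \<union> X) - Lam E C \<gamma> p lam k X"

fun chain :: "('v \<Rightarrow> 'v \<Rightarrow> 'v edge set \<Rightarrow> 'v edge set option) \<Rightarrow> 'v list \<Rightarrow> 'v edge set
     \<Rightarrow> 'v edge set option" where
  "chain rc [] Y = Some {}"
| "chain rc [w] Y = Some {}"
| "chain rc (w1 # w2 # ws) Y =
     (case rc w1 w2 Y of None \<Rightarrow> None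
      | Some Q \<Rightarrow> (case chain rc (w2 # ws) (Y \<union> Q) of None \<Rightarrow> None
                   | Some R \<Rightarrow> Some (Q \<union> R)))"

text \<open>Generalized Recursive Greedy.  sp u1 u2 X i is the (arbitrary, tie-broken) shortest
  path chosen by the call RG(u1,u2,X,i), tups is the order in which the tuples of V^(a-1)
  are enumerated, LX X A = Lambda_X(A,P).  None means "infeasible".\<close>
primrec RG :: "('v \<Rightarrow> 'v \<Rightarrow> 'v edge set \<Rightarrow> nat \<Rightarrow> 'v edge set option) \<Rightarrow> 'v list list
     \<Rightarrow> ('v edge set \<Rightarrow> 'v edge set \<Rightarrow> real) \<Rightarrow> nat \<Rightarrow> 'v \<Rightarrow> 'v \<Rightarrow> 'v edge set
     \<Rightarrow> 'v edge set option" where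
  "RG sp tups LX 0 u1 u2 X = sp u1 u2 X 0"
| "RG sp tups LX (Suc i) u1 u2 X =
     (case sp u1 u2 X (Suc i) of None \<Rightarrow> None
      | Some S \<Rightarrow> Some (fst (foldl (\<lambda>(best, r) vs.
            (case chain (\<lambda>w1 w2 Y. RG sp tups LX i w1 w2 Y) (u1 # vs @ [u2]) X of
               None \<Rightarrow> (best, r)
             | Some Q \<Rightarrow> (if LX X Q > r then (Q, LX X Q) else (best, r))))
          (S, LX X S) tups)))"

end

theory Submission
  imports Defs
begin

text \<open>Because the users are edge-disjoint, the LP defining T decouples: user i keeps the rate
  lam i minus its largest overload lam i - (C e - \<gamma>[e \<in> A]) over its own edges (clipped at 0).
  Hence \<Lambda> is a sum of maxima of modular functions, so it is monotone and submodular with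
  \<Lambda>({}) = 0, and only these properties are used afterwards.

  By induction on j: if a u-v path P has at most a^j edges, then RG at any depth i \<ge> j returns
  an R with \<Lambda>_X(P) \<le> (j + 1) \<Lambda>_X(R). At depth 0 a one-edge path is the unique shortest
  path, since E is acyclic. Otherwise cut P into a pieces of at most a^(j-1) edges; the breakpoints
  form one of the enumerated tuples, and the sequential recursive calls return Q with
  \<Lambda>_(X \<union> Q)(P) \<le> j \<Lambda>_X(Q) by subadditivity and diminishing returns. Monotonicity gives
  \<Lambda>_X(P) \<le> \<Lambda>_(X \<union> Q)(P) + \<Lambda>_X(Q), and the greedy choice gives \<Lambda>_X(Q) \<le> \<Lambda>_X(R).\<close>

lemma edges_of_singleton [simp]: "edges_of [x] = {}"
  by (simp add: edges_of_def)

lemma edges_of_Cons_Cons [simp]: "edges_of (x # y # zs) = insert (x, y) (edges_of (y # zs))"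
  by (simp add: edges_of_def)

lemma edges_of_conv_nth: "edges_of xs = {(xs ! j, xs ! Suc j) | j. Suc j < length xs}"
  by (auto simp: edges_of_def set_zip nth_tl)

lemma edges_of_append_tl:
  "xs \<noteq> [] \<Longrightarrow> ys \<noteq> [] \<Longrightarrow> last xs = hd ys \<Longrightarrow>
    edges_of (xs @ tl ys) = edges_of xs \<union> edges_of ys"
proof (induction xs rule: induct_list012)
  case (2 x)
  then show ?case by (cases ys) auto
qed auto

lemma card_edges_of: "distinct xs \<Longrightarrow> card (edges_of xs) = length xs - 1"
  unfolding edges_of_def by (subst distinct_card) (auto intro: distinct_zipI1)

lemma dwalk_iff_edges_of:
  "dwalk V E u v xs \<longleftrightarrow>
    xs \<noteq> [] \<and> hd xs = u \<and> last xs = v \<and> set xs \<subseteq> V \<and> edges_of xs \<subseteq> E"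
  by (auto simp: dwalk_def edges_of_conv_nth)

lemma dwalk_append_tl:
  assumes "dwalk V E u v xs" and "dwalk V E v w ys"
  shows "dwalk V E u w (xs @ tl ys)"
proof -
  have "last (xs @ tl ys) = w"
    using assms by (cases ys; cases "tl ys") (auto simp: dwalk_iff_edges_of)
  moreover have "set (tl ys) \<subseteq> set ys"
    by (cases ys) auto
  ultimately show ?thesis
    using assms edges_of_append_tl[of xs ys] by (auto simp: dwalk_iff_edges_of)
qed

lemma dwalk_take_drop:
  assumes walk: "dwalk V E u v xs" and n: "n < length xs"
  shows "dwalk V E u (xs ! n) (take (Suc n) xs)" and "dwalk V E (xs ! n) v (drop n xs)"
    and "edges_of xs = edges_of (take (Suc n) xs) \<union> edges_of (drop n xs)"
proof -
  have split: "xs = take (Suc n) xs @ tl (drop n xs)"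
    by (metis append_take_drop_id drop_Suc tl_drop)
  have last_take: "last (take (Suc n) xs) = xs ! n" and hd_drop: "hd (drop n xs) = xs ! n"
    using n by (auto simp: take_Suc_conv_app_nth hd_drop_conv_nth)
  have "edges_of (take (Suc n) xs @ tl (drop n xs)) =
      edges_of (take (Suc n) xs) \<union> edges_of (drop n xs)"
    using n last_take hd_drop by (intro edges_of_append_tl) auto
  then show edges: "edges_of xs = edges_of (take (Suc n) xs) \<union> edges_of (drop n xs)"
    by (simp only: split[symmetric])
  have "set (take (Suc n) xs) \<subseteq> set xs" "set (drop n xs) \<subseteq> set xs"
    by (auto dest: in_set_takeD in_set_dropD)
  then show "dwalk V E u (xs ! n) (take (Suc n) xs)" "dwalk V E (xs ! n) v (drop n xs)"
    using walk n edges last_take hd_drop by (auto simp: dwalk_iff_edges_of hd_take)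
qed

lemma dwalk_length_ge_2: "dwalk V E u v xs \<Longrightarrow> u \<noteq> v \<Longrightarrow> 2 \<le> length xs"
  by (cases xs; cases "tl xs") (auto simp: dwalk_iff_edges_of)

lemma dwalk_trancl:
  "dwalk V E u v xs \<Longrightarrow> i < j \<Longrightarrow> j < length xs \<Longrightarrow> (xs ! i, xs ! j) \<in> E\<^sup>+"
proof (induction j)
  case (Suc j)
  then have "(xs ! j, xs ! Suc j) \<in> E"
    by (auto simp: dwalk_def)
  with Suc show ?case
    by (cases "i = j") (auto intro: trancl_into_trancl)
qed simp

lemma dwalk_distinct: "acyclic E \<Longrightarrow> dwalk V E u v xs \<Longrightarrow> distinct xs"
  unfolding distinct_conv_nth acyclic_def
  by (metis dwalk_trancl linorder_neqE_nat)

lemma is_path_subset: "is_path V E u v A \<Longrightarrow> A \<subseteq> E"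
  by (auto simp: is_path_def dwalk_iff_edges_of)

lemma is_path_Un: "is_path V E u v A \<Longrightarrow> is_path V E v w B \<Longrightarrow> is_path V E u w (A \<union> B)"
  unfolding is_path_def
  by (metis dwalk_append_tl dwalk_iff_edges_of edges_of_append_tl)

lemma shortest_path_single_edge:
  assumes "acyclic E" and "is_path V E u v {(u, v)}" and "is_shortest_path V E u v S"
  shows "S = {(u, v)}"
proof -
  obtain ys where ys: "dwalk V E u v ys" "S = edges_of ys"
    using assms(3) by (auto simp: is_shortest_path_def is_path_def)
  have "u \<noteq> v"
    using assms(1,2) is_path_subset by (fastforce simp: acyclic_def)
  have "length ys - 1 \<le> 1"
    using assms(2,3) ys card_edges_of[OF dwalk_distinct[OF assms(1) ys(1)]]
    by (force simp: is_shortest_path_def)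
  with dwalk_length_ge_2[OF ys(1) \<open>u \<noteq> v\<close>] ys(1) have "ys = [u, v]"
    by (cases ys; cases "tl ys"; cases "tl (tl ys)") (auto simp: dwalk_iff_edges_of)
  with ys show ?thesis by simp
qed

locale monotone_submodular =
  fixes f :: "'a set \<Rightarrow> real"
  assumes f_mono: "A \<subseteq> B \<Longrightarrow> f A \<le> f B"
    and f_submodular: "f (A \<union> B) + f (A \<inter> B) \<le> f A + f B"
begin

definition marginal :: "'a set \<Rightarrow> 'a set \<Rightarrow> real" where
  "marginal X A = f (A \<union> X) - f X"

lemma marginal_nonneg: "0 \<le> marginal X A"
  using f_mono[of X "A \<union> X"] by (auto simp: marginal_def)

lemma marginal_empty [simp]: "marginal X {} = 0"
  by (simp add: marginal_def)

lemma marginal_antimono: "Y \<subseteq> Y' \<Longrightarrow> marginal Y' A \<le> marginal Y A"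
  using f_submodular[of "A \<union> Y" Y'] f_mono[of Y "(A \<union> Y) \<inter> Y'"]
  by (auto simp: marginal_def Un_assoc sup.absorb2)

lemma marginal_Un_le: "marginal Y (A \<union> B) \<le> marginal Y A + marginal Y B"
  using f_submodular[of "A \<union> Y" "B \<union> Y"] f_mono[of Y "(A \<union> Y) \<inter> (B \<union> Y)"]
  by (auto simp: marginal_def Un_ac)

lemma marginal_Un: "marginal Y (A \<union> B) = marginal Y A + marginal (Y \<union> A) B"
  by (simp add: marginal_def Un_ac)

lemma marginal_le_marginal_Un: "marginal X A \<le> marginal (X \<union> Q) A + marginal X Q"
  using f_mono[of "A \<union> X" "A \<union> (X \<union> Q)"] by (auto simp: marginal_def Un_ac)

end

locale edge_disjoint_users =
  fixes V :: "'v set" and E :: "'v edge set" and C :: "'v edge \<Rightarrow> real" and \<gamma> :: real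
    and k :: nat and p :: "nat \<Rightarrow> 'v edge set" and lam :: "nat \<Rightarrow> real"
  assumes finite_V: "finite V" and E_subset: "E \<subseteq> V \<times> V"
    and \<gamma>_pos: "0 < \<gamma>" and \<gamma>_le_C: "\<forall>e\<in>E. \<gamma> \<le> C e"
    and user_paths: "\<forall>i<k. \<exists>u v. is_path V E u v (p i)"
    and lam_nonneg: "\<forall>i<k. 0 \<le> lam i"
    and capacity: "\<forall>e\<in>E. (\<Sum>i\<in>{i. i < k \<and> e \<in> p i}. lam i) \<le> C e"
    and disjoint: "\<forall>i<k. \<forall>j<k. i \<noteq> j \<longrightarrow> p i \<inter> p j = {}"
begin

definition feasible :: "'v edge set \<Rightarrow> (nat \<Rightarrow> real) \<Rightarrow> bool" where
  "feasible A x \<longleftrightarrow> (\<forall>i<k. 0 \<le> x i \<and> x i \<le> lam i) \<and>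
     (\<forall>e\<in>E. (\<Sum>i\<in>{i. i < k \<and> e \<in> p i}. x i) \<le> C e - (if e \<in> A then \<gamma> else 0))"

definition overload :: "nat \<Rightarrow> 'v edge set \<Rightarrow> 'v edge \<Rightarrow> real" where
  "overload i A e = lam i - (C e - (if e \<in> A then \<gamma> else 0))"

definition user_loss :: "nat \<Rightarrow> 'v edge set \<Rightarrow> real" where
  "user_loss i A = Max (insert 0 (overload i A ` p i))"

lemma finite_E: "finite E"
  using E_subset finite_V by (meson finite_SigmaI finite_subset)

lemma p_subset_E: "i < k \<Longrightarrow> p i \<subseteq> E"
  using user_paths is_path_subset by meson

lemma finite_p: "i < k \<Longrightarrow> finite (p i)"
  using p_subset_E finite_E by (rule finite_subset)

lemma users_on_edge: "i < k \<Longrightarrow> e \<in> p i \<Longrightarrow> {j. j < k \<and> e \<in> p j} = {i}"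
  using disjoint by blast

lemma sum_users_on_edge: "i < k \<Longrightarrow> e \<in> p i \<Longrightarrow> (\<Sum>j\<in>{j. j < k \<and> e \<in> p j}. x j) = x i"
  by (simp add: users_on_edge)

lemma user_loss_le_iff:
  "i < k \<Longrightarrow> user_loss i A \<le> y \<longleftrightarrow> 0 \<le> y \<and> (\<forall>e\<in>p i. overload i A e \<le> y)"
  by (simp add: user_loss_def finite_p)

lemma overload_le_user_loss: "i < k \<Longrightarrow> e \<in> p i \<Longrightarrow> overload i A e \<le> user_loss i A"
  by (simp add: user_loss_def finite_p)

lemma user_loss_nonneg: "i < k \<Longrightarrow> 0 \<le> user_loss i A"
  by (simp add: user_loss_def finite_p)

lemma user_loss_le_lam:
  assumes i: "i < k"
  shows "user_loss i A \<le> lam i"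
proof -
  have "overload i A e \<le> lam i" if "e \<in> p i" for e
  proof -
    have "\<gamma> \<le> C e"
      using \<gamma>_le_C p_subset_E[OF i] that by blast
    then show ?thesis
      using \<gamma>_pos by (simp add: overload_def)
  qed
  then show ?thesis
    using lam_nonneg i by (simp add: user_loss_le_iff[OF i])
qed

lemma feasible_user_loss: "feasible A (\<lambda>i. lam i - user_loss i A)"
  unfolding feasible_def
proof (intro conjI allI impI ballI)
  fix i assume "i < k"
  then show "0 \<le> lam i - user_loss i A" "lam i - user_loss i A \<le> lam i"
    using user_loss_le_lam user_loss_nonneg by auto
next
  fix e assume "e \<in> E"
  show "(\<Sum>i\<in>{i. i < k \<and> e \<in> p i}. lam i - user_loss i A) \<le> C e - (if e \<in> A then \<gamma> else 0)"
  proof (cases "\<exists>i<k. e \<in> p i")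
    case True
    then obtain i where "i < k" "e \<in> p i" by blast
    then show ?thesis
      using overload_le_user_loss[of i e A] by (simp add: sum_users_on_edge overload_def)
  next
    case False
    then have "(\<Sum>i\<in>{i. i < k \<and> e \<in> p i}. lam i - user_loss i A) = 0"
      by (intro sum.neutral) blast
    then show ?thesis using \<gamma>_le_C \<gamma>_pos \<open>e \<in> E\<close> by auto
  qed
qed

lemma feasible_le:
  assumes x: "feasible A x" and i: "i < k"
  shows "x i \<le> lam i - user_loss i A"
proof -
  have "overload i A e \<le> lam i - x i" if "e \<in> p i" for e
  proof -
    have "(\<Sum>j\<in>{j. j < k \<and> e \<in> p j}. x j) \<le> C e - (if e \<in> A then \<gamma> else 0)"
      using x p_subset_E[OF i] that unfolding feasible_def by blast
    then show ?thesis
      by (simp add: sum_users_on_edge[OF i that] overload_def)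
  qed
  moreover have "0 \<le> lam i - x i"
    using x i by (simp add: feasible_def)
  ultimately have "user_loss i A \<le> lam i - x i"
    using user_loss_le_iff[OF i] by blast
  then show ?thesis by simp
qed

lemma Tval_eq_sum: "Tval E C \<gamma> p lam k A = (\<Sum>i<k. lam i - user_loss i A)"
proof -
  have "Tval E C \<gamma> p lam k A = Sup {(\<Sum>i<k. x i) | x. feasible A x}"
    by (simp add: Tval_def feasible_def)
  also have "\<dots> = (\<Sum>i<k. lam i - user_loss i A)"
    using feasible_user_loss feasible_le
    by (intro cSup_eq_maximum) (auto intro!: sum_mono)
  finally show ?thesis .
qed

lemma Lam_eq_sum: "Lam E C \<gamma> p lam k A = (\<Sum>i<k. user_loss i A)"
  by (simp add: Lam_def Tval_eq_sum sum_subtractf)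

lemma user_loss_mono:
  assumes i: "i < k" and "A \<subseteq> B"
  shows "user_loss i A \<le> user_loss i B"
proof -
  have "overload i A e \<le> user_loss i B" if "e \<in> p i" for e
    using overload_le_user_loss[OF i that, of B] \<open>A \<subseteq> B\<close> \<gamma>_pos
    by (auto simp: overload_def split: if_splits)
  then show ?thesis
    using user_loss_nonneg[OF i] by (simp add: user_loss_le_iff[OF i])
qed

lemma user_loss_Un:
  assumes i: "i < k"
  shows "user_loss i (A \<union> B) \<le> max (user_loss i A) (user_loss i B)"
proof -
  have "overload i (A \<union> B) e \<le> max (user_loss i A) (user_loss i B)" if "e \<in> p i" for e
    using overload_le_user_loss[OF i that, of A] overload_le_user_loss[OF i that, of B]
    by (auto simp: overload_def le_max_iff_disj)
  moreover have "0 \<le> max (user_loss i A) (user_loss i B)"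
    by (simp add: le_max_iff_disj user_loss_nonneg[OF i])
  ultimately show ?thesis
    using user_loss_le_iff[OF i] by blast
qed

lemma user_loss_empty: "i < k \<Longrightarrow> user_loss i {} = 0"
  using user_loss_le_iff[of i "{}" 0] user_loss_nonneg[of i "{}"] capacity p_subset_E
  by (force simp: overload_def sum_users_on_edge)

lemma Lam_empty: "Lam E C \<gamma> p lam k {} = 0"
  by (simp add: Lam_eq_sum user_loss_empty)

lemma monotone_submodular_Lam: "monotone_submodular (Lam E C \<gamma> p lam k)"
proof
  show "Lam E C \<gamma> p lam k A \<le> Lam E C \<gamma> p lam k B" if "A \<subseteq> B" for A B
    unfolding Lam_eq_sum using that by (intro sum_mono user_loss_mono) auto
  have "user_loss i (A \<union> B) + user_loss i (A \<inter> B) \<le> user_loss i A + user_loss i B"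
    if "i < k" for i A B
    using user_loss_Un[OF that, of A B] user_loss_mono[OF that Int_lower1, of A B]
      user_loss_mono[OF that Int_lower2, of A B]
    by (auto simp: max_def split: if_splits)
  then show "Lam E C \<gamma> p lam k (A \<union> B) + Lam E C \<gamma> p lam k (A \<inter> B)
      \<le> Lam E C \<gamma> p lam k A + Lam E C \<gamma> p lam k B" for A B
    unfolding Lam_eq_sum sum.distrib[symmetric] by (intro sum_mono) auto
qed

end

definition argmax_step :: "('b \<Rightarrow> 'a option) \<Rightarrow> ('a \<Rightarrow> real) \<Rightarrow> 'a \<times> real \<Rightarrow> 'b \<Rightarrow> 'a \<times> real" where
  "argmax_step g F = (\<lambda>(best, r) vs. case g vs of None \<Rightarrow> (best, r)
     | Some Q \<Rightarrow> if F Q > r then (Q, F Q) else (best, r))"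

lemma foldl_argmax_step_mem:
  "fst (foldl (argmax_step g F) (b, F b) l) \<in> insert b {Q. \<exists>vs\<in>set l. g vs = Some Q}"
proof (induction l arbitrary: b)
  case (Cons v l)
  show ?case
  proof (cases "g v")
    case (Some Q)
    then show ?thesis
      using Cons.IH[of b] Cons.IH[of Q] by (cases "F Q > F b") (auto simp: argmax_step_def)
  qed (use Cons.IH[of b] in \<open>auto simp: argmax_step_def\<close>)
qed simp

lemma foldl_argmax_step_ge:
  "F b \<le> F (fst (foldl (argmax_step g F) (b, F b) l)) \<and>
    (\<forall>vs\<in>set l. \<forall>Q. g vs = Some Q \<longrightarrow> F Q \<le> F (fst (foldl (argmax_step g F) (b, F b) l)))"
proof (induction l arbitrary: b)
  case (Cons v l)
  show ?case
  proof (cases "g v")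
    case (Some Q)
    then show ?thesis
      using Cons.IH[of b] Cons.IH[of Q] by (cases "F Q > F b") (auto simp: argmax_step_def)
  qed (use Cons.IH[of b] in \<open>auto simp: argmax_step_def\<close>)
qed simp

lemma RG_Suc_SomeE:
  fixes LX :: "'v edge set \<Rightarrow> 'v edge set \<Rightarrow> real"
  assumes "sp u v X (Suc i) = Some S"
  obtains R where "RG sp tups LX (Suc i) u v X = Some R"
    and "R = S \<or> (\<exists>vs\<in>set tups. chain (RG sp tups LX i) (u # vs @ [v]) X = Some R)"
    and "LX X S \<le> LX X R"
    and "\<And>vs Q. vs \<in> set tups \<Longrightarrow> chain (RG sp tups LX i) (u # vs @ [v]) X = Some Q \<Longrightarrow>
      LX X Q \<le> LX X R"
proof -
  let ?g = "\<lambda>vs. chain (RG sp tups LX i) (u # vs @ [v]) X"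
  let ?R = "fst (foldl (argmax_step ?g (LX X)) (S, LX X S) tups)"
  have "RG sp tups LX (Suc i) u v X = Some ?R"
    using assms by (simp add: argmax_step_def)
  with foldl_argmax_step_mem[of ?g "LX X" S tups] foldl_argmax_step_ge[of "LX X" S ?g tups]
  show ?thesis
    using that by blast
qed

lemma chain_is_path:
  assumes "\<And>w1 w2 Y R. rc w1 w2 Y = Some R \<Longrightarrow> is_path V E w1 w2 R"
  shows "chain rc (u # vs @ [v]) Y = Some Q \<Longrightarrow> is_path V E u v Q"
proof (induction vs arbitrary: u Y Q)
  case Nil
  then show ?case
    using assms by (auto split: option.splits)
next
  case (Cons w vs)
  then obtain Q1 Q2 where "rc u w Y = Some Q1" "chain rc (w # vs @ [v]) (Y \<union> Q1) = Some Q2"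
    and "Q = Q1 \<union> Q2"
    by (auto split: option.splits)
  with Cons.IH assms show ?case
    by (blast intro: is_path_Un)
qed

lemma le_power_nat_ceiling_log:
  fixes a d :: nat
  assumes "1 < a" and "1 \<le> d"
  shows "d \<le> a ^ nat \<lceil>log a d\<rceil>"
proof -
  define n where "n = nat \<lceil>log a d\<rceil>"
  have "log a d \<le> real n"
    unfolding n_def by linarith
  then have "real d \<le> real a powr real n"
    using assms by (simp add: log_le_iff)
  then have "real d \<le> real (a ^ n)"
    using assms by (simp add: powr_realpow)
  then show ?thesis
    unfolding n_def of_nat_le_iff .
qed

locale recursive_greedy = monotone_submodular f
  for f :: "'v edge set \<Rightarrow> real" +
  fixes V :: "'v set" and E :: "'v edge set" and a :: nat
    and sp :: "'v \<Rightarrow> 'v \<Rightarrow> 'v edge set \<Rightarrow> nat \<Rightarrow> 'v edge set option"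
    and tups :: "'v list list"
  assumes acyclic_E: "acyclic E" and a_ge_2: "2 \<le> a"
    and sp_None: "\<And>u v X i. sp u v X i = None \<longleftrightarrow> \<not> (\<exists>S. is_path V E u v S)"
    and sp_Some: "\<And>u v X i S. sp u v X i = Some S \<Longrightarrow> is_shortest_path V E u v S"
    and set_tups: "set tups = {vs. length vs = a - 1 \<and> set vs \<subseteq> V}"
begin

lemma sp_SomeE:
  assumes "dwalk V E u v xs"
  obtains S where "sp u v X i = Some S" and "is_shortest_path V E u v S"
  using assms sp_None sp_Some unfolding is_path_def by (metis not_None_eq)

lemma chain_marginal_bound:
  assumes piece: "\<And>Y w1 w2 ys. dwalk V E w1 w2 ys \<Longrightarrow> length ys \<le> b + 1 \<Longrightarrow>
      \<exists>R. rc w1 w2 Y = Some R \<and> marginal Y (edges_of ys) \<le> c * marginal Y R"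
  shows "dwalk V E u v xs \<Longrightarrow> length xs \<le> Suc m * b + 1 \<Longrightarrow>
    \<exists>vs Q. length vs = m \<and> set vs \<subseteq> V \<and> chain rc (u # vs @ [v]) Y = Some Q \<and>
      marginal (Y \<union> Q) (edges_of xs) \<le> c * marginal Y Q"
proof (induction m arbitrary: u xs Y)
  case 0
  then have "length xs \<le> b + 1"
    by simp
  then obtain R where R: "rc u v Y = Some R" "marginal Y (edges_of xs) \<le> c * marginal Y R"
    using piece[OF "0.prems"(1)] by blast
  moreover have "marginal (Y \<union> R) (edges_of xs) \<le> marginal Y (edges_of xs)"
    by (rule marginal_antimono) blast
  ultimately show ?case
    by (intro exI[of _ "[]"] exI[of _ R]) auto
next
  case (Suc m)
  define n where "n = min b (length xs - 1)"
  have "xs \<noteq> []"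
    using Suc.prems(1) by (simp add: dwalk_def)
  then have n: "n < length xs"
    by (simp add: n_def min_less_iff_disj)
  note split = dwalk_take_drop[OF Suc.prems(1) n]
  have "length (take (Suc n) xs) \<le> b + 1"
    by (simp add: n_def)
  then obtain Q1 where Q1: "rc u (xs ! n) Y = Some Q1"
    "marginal Y (edges_of (take (Suc n) xs)) \<le> c * marginal Y Q1"
    using piece[OF split(1)] by blast
  have "length xs \<le> b + (Suc m * b + 1)"
    using Suc.prems(2) by simp
  then have "length (drop n xs) \<le> Suc m * b + 1"
    by (simp add: n_def)
  then obtain vs Q2 where vs: "length vs = m" "set vs \<subseteq> V"
    and Q2: "chain rc (xs ! n # vs @ [v]) (Y \<union> Q1) = Some Q2"
      "marginal (Y \<union> Q1 \<union> Q2) (edges_of (drop n xs)) \<le> c * marginal (Y \<union> Q1) Q2"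
    using Suc.IH[OF split(2)] by blast
  have "xs ! n \<in> V"
    using Suc.prems(1) n by (auto simp: dwalk_def)
  have "marginal (Y \<union> (Q1 \<union> Q2)) (edges_of xs) \<le>
      marginal (Y \<union> Q1 \<union> Q2) (edges_of (take (Suc n) xs)) +
      marginal (Y \<union> Q1 \<union> Q2) (edges_of (drop n xs))"
    unfolding split(3) Un_assoc by (rule marginal_Un_le)
  also have "\<dots> \<le> c * marginal Y Q1 + c * marginal (Y \<union> Q1) Q2"
    using Q1(2) Q2(2) marginal_antimono[of Y "Y \<union> Q1 \<union> Q2" "edges_of (take (Suc n) xs)"]
    by (simp add: Un_assoc)
  also have "\<dots> = c * marginal Y (Q1 \<union> Q2)"
    by (simp add: marginal_Un distrib_left)
  finally show ?case
    using Q1(1) Q2(1) vs \<open>xs ! n \<in> V\<close>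
    by (intro exI[of _ "xs ! n # vs"] exI[of _ "Q1 \<union> Q2"]) auto
qed

lemma RG_is_path: "RG sp tups marginal i u v X = Some R \<Longrightarrow> is_path V E u v R"
proof (induction i arbitrary: u v X R)
  case 0
  then show ?case
    using sp_Some by (simp add: is_shortest_path_def)
next
  case (Suc i)
  then obtain S where S: "sp u v X (Suc i) = Some S"
    by (cases "sp u v X (Suc i)") auto
  obtain R' where "RG sp tups marginal (Suc i) u v X = Some R'"
    and R': "R' = S \<or> (\<exists>vs\<in>set tups. chain (RG sp tups marginal i) (u # vs @ [v]) X = Some R')"
    by (rule RG_Suc_SomeE[where sp = sp and tups = tups and LX = marginal, OF S]) (rule that)
  with Suc.prems have "R = R'"
    by simp
  moreover have "is_path V E u v S"
    using sp_Some[OF S] by (simp add: is_shortest_path_def)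
  moreover have "is_path V E u v Q"
    if "chain (RG sp tups marginal i) (u # vs @ [v]) X = Some Q" for vs Q
    using chain_is_path[OF Suc.IH that] .
  ultimately show ?case
    using R' by blast
qed

lemma marginal_le_shortest_path:
  assumes S: "is_shortest_path V E u v S" and xs: "dwalk V E u v xs" and "length xs \<le> 2"
  shows "marginal X (edges_of xs) \<le> marginal X S"
proof (cases "tl xs")
  case Nil
  with xs have "edges_of xs = {}"
    by (cases xs) (auto simp: dwalk_def)
  then show ?thesis
    by (simp add: marginal_nonneg)
next
  case (Cons w ws)
  with xs \<open>length xs \<le> 2\<close> have "xs = [u, v]"
    by (cases xs) (auto simp: dwalk_iff_edges_of)
  with xs have "is_path V E u v {(u, v)}"
    by (auto simp: is_path_def)
  with \<open>xs = [u, v]\<close> show ?thesis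
    using shortest_path_single_edge[OF acyclic_E _ S] by simp
qed

lemma RG_marginal_ge_sp:
  assumes S: "sp u v X i = Some S"
  shows "\<exists>R. RG sp tups marginal i u v X = Some R \<and> marginal X S \<le> marginal X R"
proof (cases i)
  case (Suc i')
  with S show ?thesis
    using RG_Suc_SomeE[where sp = sp and tups = tups and LX = marginal] by metis
qed (use S in simp)

lemma RG_Suc_marginal_bound:
  assumes pieces: "\<And>Y w1 w2 ys. dwalk V E w1 w2 ys \<Longrightarrow> length ys \<le> b + 1 \<Longrightarrow>
      \<exists>R. RG sp tups marginal i w1 w2 Y = Some R \<and> marginal Y (edges_of ys) \<le> c * marginal Y R"
    and "0 \<le> c" and xs: "dwalk V E u v xs" "length xs \<le> a * b + 1"
  shows "\<exists>R. RG sp tups marginal (Suc i) u v X = Some R \<and>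
    marginal X (edges_of xs) \<le> (c + 1) * marginal X R"
proof -
  obtain S where S: "sp u v X (Suc i) = Some S"
    using sp_SomeE[OF xs(1)] by blast
  obtain R where R: "RG sp tups marginal (Suc i) u v X = Some R"
    and R_ge: "\<And>vs Q. vs \<in> set tups \<Longrightarrow> chain (RG sp tups marginal i) (u # vs @ [v]) X = Some Q \<Longrightarrow>
      marginal X Q \<le> marginal X R"
    using RG_Suc_SomeE[where sp = sp and tups = tups and LX = marginal, OF S] by metis
  have "length xs \<le> Suc (a - 1) * b + 1"
    using xs(2) a_ge_2 by simp
  then obtain vs Q where vs: "length vs = a - 1" "set vs \<subseteq> V"
    and Q: "chain (RG sp tups marginal i) (u # vs @ [v]) X = Some Q"
      "marginal (X \<union> Q) (edges_of xs) \<le> c * marginal X Q"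
    using chain_marginal_bound[where rc = "RG sp tups marginal i", OF pieces xs(1)] by blast
  have "marginal X (edges_of xs) \<le> marginal (X \<union> Q) (edges_of xs) + marginal X Q"
    by (rule marginal_le_marginal_Un)
  also have "\<dots> \<le> (c + 1) * marginal X Q"
    using Q(2) by (simp add: algebra_simps)
  also have "\<dots> \<le> (c + 1) * marginal X R"
    using R_ge[OF _ Q(1)] vs set_tups \<open>0 \<le> c\<close> by (intro mult_left_mono) auto
  finally show ?thesis
    using R by blast
qed

lemma RG_marginal_bound:
  "j \<le> i \<Longrightarrow> dwalk V E u v xs \<Longrightarrow> length xs \<le> a ^ j + 1 \<Longrightarrow>
    \<exists>R. RG sp tups marginal i u v X = Some R \<and>
      marginal X (edges_of xs) \<le> (real j + 1) * marginal X R"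
proof (induction j arbitrary: i u v X xs)
  case 0
  obtain S where S: "sp u v X i = Some S" "is_shortest_path V E u v S"
    using sp_SomeE[OF "0.prems"(2)] .
  with 0 show ?case
    using RG_marginal_ge_sp[OF S(1)] marginal_le_shortest_path[OF S(2) "0.prems"(2)]
    by (fastforce intro: order.trans)
next
  case (Suc j)
  then obtain i' where "i = Suc i'" "j \<le> i'"
    by (cases i) auto
  have pieces: "\<exists>R. RG sp tups marginal i' w1 w2 Y = Some R \<and>
      marginal Y (edges_of ys) \<le> (real j + 1) * marginal Y R"
    if "dwalk V E w1 w2 ys" "length ys \<le> a ^ j + 1" for Y w1 w2 ys
    using Suc.IH[OF \<open>j \<le> i'\<close> that] .
  show ?case
    using RG_Suc_marginal_bound[OF pieces _ Suc.prems(2)] Suc.prems(3) \<open>i = Suc i'\<close>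
    by (simp add: add.commute)
qed

lemma RG_approximation:
  assumes P: "is_path V E s t P" and "s \<noteq> t" and I: "\<lceil>log a (card P)\<rceil> \<le> int I"
  shows "\<exists>R. RG sp tups marginal I s t {} = Some R \<and> is_path V E s t R \<and>
    (f P - f {}) / (real_of_int \<lceil>log a (card P)\<rceil> + 1) \<le> f R - f {}"
proof -
  obtain xs where xs: "dwalk V E s t xs" "P = edges_of xs"
    using P by (auto simp: is_path_def)
  have card: "card P = length xs - 1"
    using card_edges_of[OF dwalk_distinct[OF acyclic_E xs(1)]] xs(2) by simp
  then have "1 \<le> card P"
    using dwalk_length_ge_2[OF xs(1) \<open>s \<noteq> t\<close>] by simp
  define n where "n = nat \<lceil>log a (card P)\<rceil>"
  have n: "real n = real_of_int \<lceil>log a (card P)\<rceil>"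
    using a_ge_2 \<open>1 \<le> card P\<close> by (simp add: n_def)
  have "card P \<le> a ^ n"
    using le_power_nat_ceiling_log a_ge_2 \<open>1 \<le> card P\<close> by (simp add: n_def)
  then have "length xs \<le> a ^ n + 1"
    using card by linarith
  moreover have "n \<le> I"
    using I by (simp only: n_def nat_le_iff)
  ultimately obtain R where "RG sp tups marginal I s t {} = Some R"
    "marginal {} P \<le> (real n + 1) * marginal {} R"
    using RG_marginal_bound[of n I s t xs "{}"] xs by auto
  then show ?thesis
    using RG_is_path n by (auto simp: marginal_def divide_le_eq mult.commute)
qed

end

theorem theorem4:
  fixes V :: "'v set" and E :: "'v edge set" and C :: "'v edge \<Rightarrow> real" and \<gamma> :: real
    and s t :: 'v and k :: nat and p :: "nat \<Rightarrow> 'v edge set" and lam :: "nat \<Rightarrow> real"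
    and a :: nat and I :: nat and Estar :: "'v edge set" and d :: nat
    and sp :: "'v \<Rightarrow> 'v \<Rightarrow> 'v edge set \<Rightarrow> nat \<Rightarrow> 'v edge set option"
    and tups :: "'v list list"
  assumes finV: "finite V" and EV: "E \<subseteq> V \<times> V" and dag: "acyclic E"
    and Cnn: "\<forall>e\<in>E. 0 \<le> C e"
    and st: "s \<in> V" "t \<in> V" "s \<noteq> t" and conn: "\<exists>S. is_path V E s t S"
    and gam: "0 < \<gamma>" "\<forall>e\<in>E. \<gamma> \<le> C e"
    and users: "\<forall>i<k. \<exists>u v. is_path V E u v (p i)"
    and lamnn: "\<forall>i<k. 0 \<le> lam i"
    and cap: "\<forall>e\<in>E. (\<Sum>i\<in>{i. i < k \<and> e \<in> p i}. lam i) \<le> C e"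
    and disj: "\<forall>i<k. \<forall>j<k. i \<noteq> j \<longrightarrow> p i \<inter> p j = {}"
    and a2: "2 \<le> a"
    and sp_none: "\<And>u1 u2 X i. (sp u1 u2 X i = None) \<longleftrightarrow> \<not> (\<exists>S. is_path V E u1 u2 S)"
    and sp_some: "\<And>u1 u2 X i S. sp u1 u2 X i = Some S \<Longrightarrow> is_shortest_path V E u1 u2 S"
    and tups: "distinct tups" "set tups = {vs. length vs = a - 1 \<and> set vs \<subseteq> V}"
    and Estar: "is_path V E s t Estar"
      "\<forall>S. is_path V E s t S \<longrightarrow> Lam E C \<gamma> p lam k S \<le> Lam E C \<gamma> p lam k Estar"
    and d: "d = card Estar"
    and I: "int I \<ge> \<lceil>log (real a) (real d)\<rceil>"
  shows "\<exists>Ef. RG sp tups (LamX E C \<gamma> p lam k) I s t {} = Some Ef \<and> is_path V E s t Ef \<and>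
           Lam E C \<gamma> p lam k Ef \<ge>
             Lam E C \<gamma> p lam k Estar / (real_of_int \<lceil>log (real a) (real d)\<rceil> + 1)"
proof -
  interpret edge_disjoint_users V E C \<gamma> k p lam
    using finV EV gam users lamnn cap disj by unfold_locales
  interpret recursive_greedy "Lam E C \<gamma> p lam k" V E a sp tups
    using monotone_submodular_Lam dag a2 sp_none sp_some tups(2)
    by (intro recursive_greedy.intro recursive_greedy_axioms.intro) auto
  have "LamX E C \<gamma> p lam k = marginal"
    by (simp add: fun_eq_iff LamX_def marginal_def)
  then show ?thesis
    using RG_approximation[OF Estar(1) st(3) I[unfolded d]] Lam_empty d by simp
qed

end
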